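(* Let $p_1,\ldots,p_n\in\mathscr{A}_0$ with $p_i(0)>0$ for all $i$. If there exists $\theta\in[0,\pi/2)$ such that for all $i$ $$\mathrm{Re}\Big(e^{j\theta}\big(1+p_i(j\omega)/(j\omega)\big)\Big)>0\quad\forall\,\omega>0,$$ then there exists $h\in\mathrm{PR}\cap\mathscr{A}_0$ such that $p_1,\ldots,p_n\in\mathcal{P}_h$.
   Context: $\mathscr{H}_\infty$: functions analytic and bounded on $\mathrm{Re}(s)>0$; $\mathscr{A}_0$: those in $\mathscr{H}_\infty$ extending continuously to $j\mathbb{R}\cup\{\infty\}$. $g\in\mathrm{PR}$ if $g$ is analytic in $\mathrm{Re}(s)>0$, real for positive real $s$, and $\mathrm{Re}(g(s))\ge0$ for $\mathrm{Re}(s)>0$; $g\in\mathrm{ESPR}$ if moreover $g\in\mathscr{A}_0$ and $g-\epsilon\in\mathrm{PR}$ for some $\epsilon>0$. $\mathcal{P}_h:=\{p\in\mathscr{H}_\infty: p(0)\ne0,\ h(s)(1+p(s)/s)\in\mathrm{ESPR}\}$. Transfer functions are assumed real on the positive real axis. *)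

theory Defs
  imports "HOL-Analysis.Analysis"
begin

definition RHP :: "complex set" where
  "RHP = {s. Re s > 0}"

definition cRHP :: "complex set" where
  "cRHP = {s. Re s \<ge> 0}"

definition Hinf :: "(complex \<Rightarrow> complex) \<Rightarrow> bool" where
  "Hinf g \<longleftrightarrow> g holomorphic_on RHP \<and> bounded (g ` RHP)"

definition A0 :: "(complex \<Rightarrow> complex) \<Rightarrow> bool" where
  "A0 g \<longleftrightarrow> Hinf g \<and>
     (\<exists>G. (\<forall>s\<in>RHP. G s = g s) \<and> continuous_on cRHP G \<and>
          (\<exists>L. (G \<longlongrightarrow> L) (inf at_infinity (principal cRHP))))"

text \<open>Boundary value of g at a point z of the closed half-plane
  (the value of the continuous extension).\<close>
definition bval :: "(complex \<Rightarrow> complex) \<Rightarrow> complex \<Rightarrow> complex" where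
  "bval g z = Lim (at z within RHP) g"

definition PR :: "(complex \<Rightarrow> complex) \<Rightarrow> bool" where
  "PR g \<longleftrightarrow> g holomorphic_on RHP \<and> (\<forall>x::real. x > 0 \<longrightarrow> g (of_real x) \<in> \<real>) \<and>
     (\<forall>s\<in>RHP. Re (g s) \<ge> 0)"

definition ESPR :: "(complex \<Rightarrow> complex) \<Rightarrow> bool" where
  "ESPR g \<longleftrightarrow> PR g \<and> A0 g \<and> (\<exists>\<epsilon>::real. \<epsilon> > 0 \<and> PR (\<lambda>s. g s - of_real \<epsilon>))"

definition Pset :: "(complex \<Rightarrow> complex) \<Rightarrow> (complex \<Rightarrow> complex) set" where
  "Pset h = {p. Hinf p \<and> bval p 0 \<noteq> 0 \<and> ESPR (\<lambda>s. h s * (1 + p s / s))}"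

end

theory Submission
  imports Defs "HOL-Complex_Analysis.Complex_Analysis"
begin

text \<open>Take h(s) = s k(s) with k(s) = (s + a) powr (\<gamma> - 1) * (s + b) powr (-\<gamma>), where
  \<gamma> = 2\<theta>/pi, a is small and b is large, so that h(s)(1 + p(s)/s) = k(s)(s + p(s)). On the
  imaginary axis the phase of k(j\<omega>) is about 0 for \<omega> << a, about -(pi/2 - \<theta>) for
  a << \<omega> << b and about -pi/2 for \<omega> >> b. Rotating j\<omega> + p(j\<omega>) by this phase keeps its
  real part positive: near 0 because p(0) > 0, in the middle range because the hypothesis says
  exactly that exp(-j(pi/2 - \<theta>)) (j\<omega> + p(j\<omega>)) has positive real part (with a margin, by
  compactness), and at high frequency because j\<omega> dominates the bounded p. Conjugate symmetry
  extends positivity to negative frequencies, the limit 1 at infinity bounds it away from 0, and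
  the minimum principle carries the bound into the half-plane. The same argument with p = 0
  shows that h is positive real.\<close>

abbreviation cRHP_at_infinity :: "complex filter" where
  "cRHP_at_infinity \<equiv> inf at_infinity (principal cRHP)"

lemma eventually_cRHP_at_infinity:
  "eventually P cRHP_at_infinity \<longleftrightarrow> (\<exists>R. \<forall>s\<in>cRHP. norm s \<ge> R \<longrightarrow> P s)"
  unfolding eventually_inf_principal eventually_at_infinity by blast

lemma RHP_subset_cRHP: "RHP \<subseteq> cRHP"
  by (auto simp: RHP_def cRHP_def)

lemma open_RHP: "open RHP"
  unfolding RHP_def by (simp add: open_halfspace_Re_gt)

lemma closed_cRHP: "closed cRHP"
  unfolding cRHP_def by (simp add: closed_halfspace_Re_ge)

lemma imag_axis_in_cRHP [simp]: "\<i> * of_real w \<in> cRHP"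
  by (simp add: cRHP_def)

lemma islimpt_RHP: assumes "z \<in> cRHP" shows "z islimpt RHP"
proof (rule islimptI)
  fix T assume "z \<in> T" "open T"
  then obtain e where e: "e > 0" "ball z e \<subseteq> T" using open_contains_ball by blast
  let ?y = "z + of_real (e/2)"
  have "?y \<in> RHP" "?y \<in> T" "?y \<noteq> z"
    using assms e by (auto simp: RHP_def cRHP_def dist_norm)
  then show "\<exists>y\<in>RHP. y \<in> T \<and> y \<noteq> z" by blast
qed

lemma closure_RHP: "closure RHP = cRHP"
proof
  show "closure RHP \<subseteq> cRHP" using RHP_subset_cRHP closed_cRHP closure_minimal by blast
  show "cRHP \<subseteq> closure RHP" using islimpt_RHP closure_def by blast
qed

lemma filterlim_imag_axis_at_infinity:
  "filterlim (\<lambda>w::real. \<i> * of_real w) cRHP_at_infinity at_infinity"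
  unfolding filterlim_inf filterlim_principal
proof
  have "filterlim (\<lambda>w::real. norm w) at_top at_infinity" by (rule filterlim_norm_at_top)
  then show "filterlim (\<lambda>w::real. \<i> * of_real w) at_infinity at_infinity"
    unfolding filterlim_at_infinity_conv_norm_at_top by (simp add: norm_mult)
qed simp

lemma bval_eq_extension:
  assumes "continuous_on cRHP G" "\<forall>s\<in>RHP. G s = g s" "z \<in> cRHP"
  shows "bval g z = G z"
proof -
  have "(G \<longlongrightarrow> G z) (at z within RHP)"
    using assms RHP_subset_cRHP continuous_on_def tendsto_within_subset by blast
  then have "(g \<longlongrightarrow> G z) (at z within RHP)"
    by (rule Lim_transform_within[where d=1]) (use assms in auto)
  moreover have "at z within RHP \<noteq> bot"
    using islimpt_RHP[OF assms(3)] by (simp add: trivial_limit_within)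
  ultimately show ?thesis unfolding bval_def by (simp add: tendsto_Lim)
qed

lemma A0_bval_extension:
  assumes "A0 g"
  shows "continuous_on cRHP (bval g)" "\<forall>s\<in>RHP. bval g s = g s"
    "\<exists>L. (bval g \<longlongrightarrow> L) cRHP_at_infinity"
proof -
  obtain G L where G: "\<forall>s\<in>RHP. G s = g s" "continuous_on cRHP G" "(G \<longlongrightarrow> L) cRHP_at_infinity"
    using assms unfolding A0_def by blast
  have eq: "\<forall>z\<in>cRHP. bval g z = G z" using bval_eq_extension G(1,2) by blast
  show "continuous_on cRHP (bval g)" using continuous_on_cong G(2) eq by force
  show "\<forall>s\<in>RHP. bval g s = g s" using eq G(1) RHP_subset_cRHP by auto
  have "eventually (\<lambda>z. G z = bval g z) cRHP_at_infinity"
    using eq by (auto simp: eventually_inf_principal)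
  then show "\<exists>L. (bval g \<longlongrightarrow> L) cRHP_at_infinity" using tendsto_cong G(3) by blast
qed

lemma bounded_image_cRHP:
  fixes G :: "complex \<Rightarrow> complex"
  assumes "continuous_on cRHP G" "(G \<longlongrightarrow> L) cRHP_at_infinity"
  shows "bounded (G ` cRHP)"
proof -
  have "eventually (\<lambda>s. dist (G s) L < 1) cRHP_at_infinity"
    using assms(2) tendstoD by fastforce
  then obtain R where R: "\<forall>s\<in>cRHP. norm s \<ge> R \<longrightarrow> dist (G s) L < 1"
    unfolding eventually_cRHP_at_infinity by blast
  have "compact (G ` (cRHP \<inter> cball 0 R))"
    by (metis closed_Int_compact[OF closed_cRHP compact_cball] compact_continuous_image
        continuous_on_subset assms(1) inf_le1)
  then have near: "bounded (G ` (cRHP \<inter> cball 0 R))" by (rule compact_imp_bounded)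
  have far: "bounded (G ` (cRHP - cball 0 R))"
    unfolding bounded_iff
  proof (intro exI[of _ "norm L + 1"] ballI)
    fix v assume "v \<in> G ` (cRHP - cball 0 R)"
    then obtain s where s: "s \<in> cRHP" "norm s > R" "v = G s" by auto
    then have "dist (G s) L < 1" using R by auto
    then show "norm v \<le> norm L + 1" using s norm_triangle_sub[of "G s" L]
      by (simp add: dist_norm)
  qed
  have "G ` cRHP \<subseteq> G ` (cRHP \<inter> cball 0 R) \<union> G ` (cRHP - cball 0 R)" by blast
  then show ?thesis using near far bounded_Un bounded_subset by blast
qed

lemma A0_if_continuous_extension:
  assumes "g holomorphic_on RHP" "continuous_on cRHP G" "\<forall>s\<in>RHP. G s = g s"
    and "(G \<longlongrightarrow> L) cRHP_at_infinity"
  shows "A0 g"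
proof -
  have "g ` RHP \<subseteq> G ` cRHP" using assms(3) RHP_subset_cRHP by force
  then have "bounded (g ` RHP)"
    using bounded_subset bounded_image_cRHP[OF assms(2,4)] by blast
  then show ?thesis unfolding A0_def Hinf_def using assms by blast
qed

lemma eventually_Re_gt_at_infinity:
  assumes lim: "(G \<longlongrightarrow> L) cRHP_at_infinity" and bd: "\<forall>w::real. Re (G (\<i> * of_real w)) \<ge> c"
    and "d > 0"
  shows "\<exists>R. \<forall>s\<in>cRHP. norm s \<ge> R \<longrightarrow> Re (G s) > c - d"
proof -
  have limRe: "((\<lambda>s. Re (G s)) \<longlongrightarrow> Re L) cRHP_at_infinity" using lim by (rule tendsto_Re)
  have "((\<lambda>w::real. Re (G (\<i> * of_real w))) \<longlongrightarrow> Re L) at_top"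
    using filterlim_compose[OF limRe filterlim_imag_axis_at_infinity] at_top_le_at_infinity
      tendsto_mono by blast
  then have "c \<le> Re L" by (rule tendsto_lowerbound) (use bd in auto)
  then have "eventually (\<lambda>s. Re (G s) > c - d) cRHP_at_infinity"
    using order_tendstoD(1)[OF limRe] \<open>d > 0\<close> by simp
  then show ?thesis unfolding eventually_cRHP_at_infinity .
qed

lemma Re_ge_on_RHP_if_ge_on_imag_axis:
  assumes hol: "G holomorphic_on RHP" and cont: "continuous_on cRHP G"
    and lim: "(G \<longlongrightarrow> L) cRHP_at_infinity" and bd: "\<forall>w::real. Re (G (\<i> * of_real w)) \<ge> c"
  shows "\<forall>s\<in>RHP. Re (G s) \<ge> c"
proof (intro ballI, rule ccontr)
  fix s0 assume s0: "s0 \<in> RHP" "\<not> c \<le> Re (G s0)"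
  define d where "d = (c - Re (G s0)) / 2"
  have d: "d > 0" using s0 d_def by auto
  obtain R where R: "\<forall>s\<in>cRHP. norm s \<ge> R \<longrightarrow> Re (G s) > c - d"
    using eventually_Re_gt_at_infinity[OF lim bd d] by blast
  define S where "S = RHP \<inter> ball 0 (max R (norm s0 + 1))"
  have openS: "open S" unfolding S_def using open_RHP by auto
  have "closure S \<subseteq> cball 0 (max R (norm s0 + 1))"
    unfolding S_def by (rule closure_minimal) auto
  then have clS: "closure S \<subseteq> cRHP \<inter> cball 0 (max R (norm s0 + 1))"
    using closure_mono[of S RHP] closure_RHP unfolding S_def by auto
  have "Re (- G s0) \<le> - (c - d)"
  proof (rule maximum_real_frontier[where S=S and f="\<lambda>s. - G s"])
    show "(\<lambda>s. - G s) holomorphic_on interior S"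
      using openS holomorphic_on_subset[OF hol, of S]
      by (auto simp: interior_open open_RHP S_def intro!: holomorphic_intros)
    show "continuous_on (closure S) (\<lambda>s. - G s)"
      using continuous_on_subset[OF cont] clS by (auto intro!: continuous_intros)
    show "bounded S" "s0 \<in> S" using s0 unfolding S_def by auto
    fix z assume "z \<in> frontier S"
    then have z: "z \<in> cRHP" "norm z \<le> max R (norm s0 + 1)" "z \<notin> S"
      using clS openS by (auto simp: frontier_def interior_open)
    show "Re (- G z) \<le> - (c - d)"
    proof (cases "Re z = 0")
      case True
      then have "z = \<i> * of_real (Im z)" by (simp add: complex_eq_iff)
      then have "Re (G z) \<ge> c" using bd by metis
      then show ?thesis using d by simp
    next
      case False
      then have "norm z \<ge> R" using z by (auto simp: cRHP_def RHP_def S_def)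
      then show ?thesis using R z by fastforce
    qed
  qed
  then have "Re (G s0) \<ge> c - d" by simp
  then show False using s0(2) d_def by (simp add: field_simps)
qed

lemma cnj_symmetric_if_real_on_pos_reals:
  assumes hol: "p holomorphic_on RHP" and real: "\<forall>x::real. x > 0 \<longrightarrow> p (of_real x) \<in> \<real>"
    and s: "s \<in> RHP"
  shows "p (cnj s) = cnj (p s)"
proof -
  have "cnj ` RHP = RHP"
    by (auto simp: RHP_def image_iff intro!: exI[of _ "cnj x" for x])
  then have "(cnj \<circ> p \<circ> cnj) holomorphic_on RHP"
    using holomorphic_on_compose_cnj_cnj hol open_RHP by metis
  then have hol_diff: "(\<lambda>z. p z - (cnj \<circ> p \<circ> cnj) z) holomorphic_on RHP"
    by (intro holomorphic_intros hol)
  have limpt: "(1::complex) islimpt of_real ` {0<..}"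
  proof (rule islimpt_approachable[THEN iffD2], intro allI impI)
    fix e :: real assume "e > 0"
    then have "complex_of_real (1 + e/2) \<in> of_real ` {0<..}" by (intro imageI) auto
    moreover have "complex_of_real (1 + e/2) \<noteq> 1" "dist (complex_of_real (1 + e/2)) 1 < e"
      using \<open>e > 0\<close> by (simp_all add: dist_norm)
    ultimately show "\<exists>x'\<in>(of_real ` {0<..} :: complex set). x' \<noteq> 1 \<and> dist x' 1 < e" by blast
  qed
  have "(\<lambda>z. p z - (cnj \<circ> p \<circ> cnj) z) (cnj s) = 0"
  proof (rule analytic_continuation[OF hol_diff open_RHP convex_connected _ _ limpt])
    show "convex RHP" unfolding RHP_def by (rule convex_halfspace_Re_gt)
    show "of_real ` {0<..} \<subseteq> RHP" "(1::complex) \<in> RHP" "cnj s \<in> RHP"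
      using s by (auto simp: RHP_def)
    fix z assume "z \<in> (of_real ` {0<..} :: complex set)"
    then show "p z - (cnj \<circ> p \<circ> cnj) z = 0" using real by (auto simp: Reals_cnj_iff)
  qed
  then show ?thesis by simp
qed

lemma bval_cnj:
  assumes "A0 p" and real: "\<forall>x::real. x > 0 \<longrightarrow> p (of_real x) \<in> \<real>" and z: "z \<in> cRHP"
  shows "bval p (cnj z) = cnj (bval p z)"
proof -
  have cont: "continuous_on cRHP (bval p)" and eq: "\<forall>s\<in>RHP. bval p s = p s"
    using A0_bval_extension[OF \<open>A0 p\<close>] by blast+
  have hol: "p holomorphic_on RHP" using \<open>A0 p\<close> unfolding A0_def Hinf_def by blast
  have "continuous_on cRHP (\<lambda>s. bval p (cnj s))"
    by (rule continuous_on_compose2[OF cont continuous_on_cnj]) (auto simp: cRHP_def)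
  then have "((\<lambda>s. bval p (cnj s)) \<longlongrightarrow> bval p (cnj z)) (at z within RHP)"
    using z RHP_subset_cRHP continuous_on_def tendsto_within_subset by blast
  then have lim1: "((\<lambda>s. cnj (bval p s)) \<longlongrightarrow> bval p (cnj z)) (at z within RHP)"
  proof (rule Lim_transform_within[OF _ zero_less_one])
    fix s assume "s \<in> RHP"
    moreover then have "cnj s \<in> RHP" by (auto simp: RHP_def)
    ultimately show "bval p (cnj s) = cnj (bval p s)"
      using eq cnj_symmetric_if_real_on_pos_reals[OF hol real] by simp
  qed
  have "((\<lambda>s. cnj (bval p s)) \<longlongrightarrow> cnj (bval p z)) (at z within RHP)"
    using continuous_on_cnj[OF cont] z RHP_subset_cRHP continuous_on_def tendsto_within_subset
    by blast
  moreover have "at z within RHP \<noteq> bot"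
    using islimpt_RHP[OF z] by (simp add: trivial_limit_within)
  ultimately show ?thesis using tendsto_unique lim1 by blast
qed

lemma Re_imag_axis_abs:
  assumes "\<forall>z\<in>cRHP. F (cnj z) = cnj (F z)"
  shows "Re (F (\<i> * of_real \<bar>w\<bar>)) = Re (F (\<i> * of_real w))"
proof (cases "w \<ge> 0")
  case False
  have "cnj (\<i> * of_real (- w)) = \<i> * of_real w" by (simp add: complex_eq_iff)
  then have "F (\<i> * of_real w) = cnj (F (\<i> * of_real (- w)))"
    using assms imag_axis_in_cRHP by metis
  then show ?thesis using False by simp
qed simp

lemma continuous_pos_imp_bounded_below:
  fixes f :: "real \<Rightarrow> real"
  assumes cont: "continuous_on UNIV f" and pos: "\<forall>x. f x > 0"
    and lim: "(f \<longlongrightarrow> l) at_infinity" "l > 0"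
  shows "\<exists>e>0. \<forall>x. f x \<ge> e"
proof -
  have "eventually (\<lambda>x. f x > l/2) at_infinity" using order_tendstoD(1)[OF lim(1), of "l/2"] lim(2) by simp
  then obtain R where R: "\<forall>x. \<bar>x\<bar> \<ge> R \<longrightarrow> f x > l/2" unfolding eventually_at_infinity by auto
  have "\<exists>xm\<in>{-\<bar>R\<bar>..\<bar>R\<bar>}. \<forall>x\<in>{-\<bar>R\<bar>..\<bar>R\<bar>}. f xm \<le> f x"
    by (rule continuous_attains_inf[OF compact_Icc _ continuous_on_subset[OF cont]]) auto
  then obtain xm where xm: "\<forall>x\<in>{-\<bar>R\<bar>..\<bar>R\<bar>}. f xm \<le> f x" by blast
  have "min (f xm) (l/2) \<le> f x" for x
  proof (cases "\<bar>x\<bar> \<ge> R")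
    case True
    then have "f x > l/2" using R by blast
    then show ?thesis by linarith
  next
    case False
    then have "x \<in> {-\<bar>R\<bar>..\<bar>R\<bar>}" by auto
    then have "f xm \<le> f x" using xm by blast
    then show ?thesis by linarith
  qed
  then show ?thesis using pos lim(2) by (intro exI[of _ "min (f xm) (l/2)"]) auto
qed

lemma PR_minus_const_if_Re_imag_axis_ge:
  assumes hol: "g holomorphic_on RHP" and real: "\<forall>x::real. x > 0 \<longrightarrow> g (of_real x) \<in> \<real>"
    and ext: "continuous_on cRHP G" "\<forall>s\<in>RHP. G s = g s" "(G \<longlongrightarrow> L) cRHP_at_infinity"
    and bd: "\<forall>w::real. Re (G (\<i> * of_real w)) \<ge> c"
  shows "PR (\<lambda>s. g s - of_real c)"
proof -
  have "G holomorphic_on RHP" by (rule holomorphic_transform[OF hol]) (use ext(2) in simp)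
  then have "\<forall>s\<in>RHP. Re (g s) \<ge> c"
    using Re_ge_on_RHP_if_ge_on_imag_axis[OF _ ext(1,3) bd] ext(2) by simp
  then show ?thesis unfolding PR_def using hol real by (auto intro!: holomorphic_intros)
qed

lemma ESPR_if_Re_imag_axis_pos:
  assumes hol: "g holomorphic_on RHP" and real: "\<forall>x::real. x > 0 \<longrightarrow> g (of_real x) \<in> \<real>"
    and ext: "continuous_on cRHP G" "\<forall>s\<in>RHP. G s = g s" "(G \<longlongrightarrow> L) cRHP_at_infinity"
    and pos: "\<forall>w::real. Re (G (\<i> * of_real w)) > 0" "Re L > 0"
  shows "ESPR g"
proof -
  have "continuous_on UNIV (\<lambda>w::real. Re (G (\<i> * of_real w)))"
    by (intro continuous_intros continuous_on_compose2[OF ext(1)]) auto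
  moreover have "((\<lambda>w. Re (G (\<i> * of_real w))) \<longlongrightarrow> Re L) at_infinity"
    by (intro tendsto_Re filterlim_compose[OF ext(3) filterlim_imag_axis_at_infinity])
  ultimately obtain \<epsilon> where \<epsilon>: "\<epsilon> > 0" "\<forall>w. Re (G (\<i> * of_real w)) \<ge> \<epsilon>"
    using continuous_pos_imp_bounded_below pos by blast
  have "\<forall>w. Re (G (\<i> * of_real w)) \<ge> 0" using \<epsilon> by (metis dual_order.trans less_eq_real_def)
  then have "PR g" using PR_minus_const_if_Re_imag_axis_ge[OF hol real ext, of 0] by simp
  moreover have "PR (\<lambda>s. g s - of_real \<epsilon>)"
    using PR_minus_const_if_Re_imag_axis_ge[OF hol real ext \<epsilon>(2)] .
  moreover have "A0 g" using A0_if_continuous_extension[OF hol ext] .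
  ultimately show ?thesis unfolding ESPR_def using \<epsilon>(1) by blast
qed

definition lag_weight :: "real \<Rightarrow> real \<Rightarrow> real \<Rightarrow> complex \<Rightarrow> complex" where
  "lag_weight a b \<gamma> s = exp (- of_real (1 - \<gamma>) * Ln (s + of_real a) - of_real \<gamma> * Ln (s + of_real b))"

definition lag_arg :: "real \<Rightarrow> real \<Rightarrow> real \<Rightarrow> real \<Rightarrow> real" where
  "lag_arg a b \<gamma> w = (1 - \<gamma>) * arctan (w / a) + \<gamma> * arctan (w / b)"

lemma lag_weight_holomorphic: "a > 0 \<Longrightarrow> b > 0 \<Longrightarrow> lag_weight a b \<gamma> holomorphic_on RHP"
  unfolding lag_weight_def
  by (intro holomorphic_intros) (auto simp: RHP_def complex_nonpos_Reals_iff)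

lemma lag_weight_continuous: "a > 0 \<Longrightarrow> b > 0 \<Longrightarrow> continuous_on cRHP (lag_weight a b \<gamma>)"
  unfolding lag_weight_def
  by (intro continuous_intros) (auto simp: cRHP_def complex_nonpos_Reals_iff)

lemma lag_weight_of_real:
  assumes "a > 0" "b > 0" "x \<ge> 0"
  shows "lag_weight a b \<gamma> (of_real x) \<in> \<real>"
proof -
  have "Ln (of_real x + of_real c) = of_real (ln (x + c))" if "c > 0" for c
    using assms that by (metis Ln_of_real add_nonneg_pos of_real_add)
  then have "lag_weight a b \<gamma> (of_real x) = exp (of_real (- (1 - \<gamma>) * ln (x + a) - \<gamma> * ln (x + b)))"
    unfolding lag_weight_def using assms by simp
  then show ?thesis by (simp only: exp_of_real Reals_of_real)
qed

lemma lag_weight_cnj: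
  assumes "a > 0" "b > 0" "s \<in> cRHP"
  shows "lag_weight a b \<gamma> (cnj s) = cnj (lag_weight a b \<gamma> s)"
proof -
  have "cnj (Ln (s + of_real c)) = Ln (cnj s + of_real c)" if "c > 0" for c
    using cnj_Ln[of "s + of_real c"] assms that by (auto simp: cRHP_def complex_nonpos_Reals_iff)
  then show ?thesis using assms unfolding lag_weight_def by (simp add: exp_cnj)
qed

lemma lag_weight_imag_axis:
  assumes "a > 0" "b > 0"
  shows "\<exists>\<rho>>0. lag_weight a b \<gamma> (\<i> * of_real w) = of_real \<rho> * cis (- lag_arg a b \<gamma> w)"
proof -
  define E where "E = - of_real (1 - \<gamma>) * Ln (\<i> * of_real w + of_real a)
    - of_real \<gamma> * Ln (\<i> * of_real w + of_real b)"
  have "Im (Ln (\<i> * of_real w + of_real c)) = arctan (w / c)" if "c > 0" for c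
  proof -
    have "\<i> * of_real w + of_real c \<noteq> 0" using that by (auto simp: complex_eq_iff)
    then show ?thesis using that by (simp add: Arg_eq_Im_Ln[symmetric] arg_conv_arctan)
  qed
  then have "Im E = - lag_arg a b \<gamma> w"
    unfolding E_def lag_arg_def using assms by (simp add: algebra_simps)
  then have "lag_weight a b \<gamma> (\<i> * of_real w) = of_real (exp (Re E)) * cis (- lag_arg a b \<gamma> w)"
    unfolding lag_weight_def E_def[symmetric] by (simp add: exp_eq_polar)
  then show ?thesis by (intro exI[of _ "exp (Re E)"]) auto
qed

lemma Ln_add_real:
  assumes "c > 0" "s \<in> cRHP" "s \<noteq> 0"
  shows "Ln (s + of_real c) = Ln s + Ln (1 + of_real c / s)"
proof -
  have "Re (of_real c / s) \<ge> 0"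
    using assms by (auto simp: Re_divide cRHP_def intro!: divide_nonneg_nonneg)
  then have Re_pos: "Re (1 + of_real c / s) > 0" by simp
  then have nz: "1 + of_real c / s \<noteq> 0" by (metis less_irrefl zero_complex.sel(1))
  have "\<bar>Im (Ln s)\<bar> \<le> pi/2" using Re_Ln_pos_le[OF assms(3)] assms(2) by (simp add: cRHP_def)
  moreover have "\<bar>Im (Ln (1 + of_real c / s))\<bar> < pi/2" using Re_Ln_pos_lt_imp[OF Re_pos] .
  ultimately have "Ln (s * (1 + of_real c / s)) = Ln s + Ln (1 + of_real c / s)"
    by (intro Ln_times_simple[OF assms(3) nz]) linarith+
  moreover have "s * (1 + of_real c / s) = s + of_real c" using assms(3) by (simp add: field_simps)
  ultimately show ?thesis by simp
qed

lemma tendsto_lag_weight: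
  assumes "a > 0" "b > 0"
  shows "((\<lambda>s. s * lag_weight a b \<gamma> s) \<longlongrightarrow> 1) cRHP_at_infinity"
    "(lag_weight a b \<gamma> \<longlongrightarrow> 0) cRHP_at_infinity"
proof -
  define H where "H s = exp (- of_real (1 - \<gamma>) * Ln (1 + of_real a / s) - of_real \<gamma> * Ln (1 + of_real b / s))"
    for s
  have ev: "eventually (\<lambda>s. s \<in> cRHP \<and> s \<noteq> 0) cRHP_at_infinity"
    unfolding eventually_cRHP_at_infinity by (rule exI[of _ 1]) auto
  have "s * lag_weight a b \<gamma> s = H s" if "s \<in> cRHP" "s \<noteq> 0" for s
  proof -
    have "s * lag_weight a b \<gamma> s = exp (Ln s + (- of_real (1 - \<gamma>) * Ln (s + of_real a)
        - of_real \<gamma> * Ln (s + of_real b)))"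
      unfolding lag_weight_def using that by (simp add: exp_add)
    then show ?thesis
      unfolding H_def Ln_add_real[OF assms(1) that] Ln_add_real[OF assms(2) that]
      by (simp add: algebra_simps)
  qed
  then have ev_eq: "eventually (\<lambda>s. H s = s * lag_weight a b \<gamma> s) cRHP_at_infinity"
    using eventually_mono[OF ev] by force
  have "((\<lambda>s::complex. of_real c / s) \<longlongrightarrow> 0) at_infinity" for c
    using tendsto_divide_0[OF tendsto_const[of "of_real c :: complex"] filterlim_ident] by simp
  then have "(H \<longlongrightarrow> exp (- of_real (1 - \<gamma>) * Ln (1 + 0) - of_real \<gamma> * Ln (1 + 0))) at_infinity"
    unfolding H_def by (intro tendsto_intros) auto
  then have "(H \<longlongrightarrow> 1) cRHP_at_infinity" by (simp add: tendsto_mono[OF inf_le1])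
  then show lim1: "((\<lambda>s. s * lag_weight a b \<gamma> s) \<longlongrightarrow> 1) cRHP_at_infinity"
    using tendsto_cong[OF ev_eq] by blast
  have "((\<lambda>s. s * lag_weight a b \<gamma> s * inverse s) \<longlongrightarrow> 1 * 0) cRHP_at_infinity"
    by (intro tendsto_mult lim1 tendsto_mono[OF inf_le1 tendsto_inverse_0])
  then have lim0: "((\<lambda>s. s * lag_weight a b \<gamma> s * inverse s) \<longlongrightarrow> 0) cRHP_at_infinity"
    by simp
  have ev0: "eventually (\<lambda>s. s * lag_weight a b \<gamma> s * inverse s = lag_weight a b \<gamma> s)
      cRHP_at_infinity"
    by (rule eventually_mono[OF ev]) auto
  show "(lag_weight a b \<gamma> \<longlongrightarrow> 0) cRHP_at_infinity" using tendsto_cong[OF ev0] lim0 by blast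
qed

lemma lag_arg_bounds:
  assumes "0 \<le> \<gamma>" "\<gamma> < 1" "a > 0" "b > 0" "w > 0"
  shows "0 < lag_arg a b \<gamma> w" "lag_arg a b \<gamma> w < pi/2"
proof -
  have "0 < (1 - \<gamma>) * arctan (w / a)" "0 \<le> \<gamma> * arctan (w / b)" using assms by simp_all
  then show "0 < lag_arg a b \<gamma> w" unfolding lag_arg_def by linarith
  have "(1 - \<gamma>) * arctan (w / a) < (1 - \<gamma>) * (pi/2)" using assms arctan_ubound by simp
  moreover have "\<gamma> * arctan (w / b) \<le> \<gamma> * (pi/2)"
    using assms arctan_ubound[of "w / b"] by (intro mult_left_mono) auto
  ultimately show "lag_arg a b \<gamma> w < pi/2" unfolding lag_arg_def by (simp add: algebra_simps)
qed

lemma lag_arg_eq: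
  assumes "a > 0" "w > 0"
  shows "lag_arg a b \<gamma> w = (1 - \<gamma>) * (pi/2) - (1 - \<gamma>) * arctan (a / w) + \<gamma> * arctan (w / b)"
proof -
  have "arctan (w / a) = pi/2 - arctan (a / w)" using arctan_inverse[of "w / a"] assms by simp
  then show ?thesis unfolding lag_arg_def by (simp only:) (simp add: algebra_simps)
qed

lemma abs_sin_diff_le: fixes u v :: real shows "\<bar>sin u - sin v\<bar> \<le> \<bar>u - v\<bar>"
proof -
  have "\<bar>sin u - sin v\<bar> = 2 * \<bar>sin ((u - v) / 2)\<bar> * \<bar>cos ((u + v) / 2)\<bar>"
    by (simp add: sin_diff_sin abs_mult)
  also have "\<dots> \<le> 2 * \<bar>(u - v) / 2\<bar> * 1"
    by (intro mult_mono abs_sin_x_le_abs_x) auto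
  finally show ?thesis by simp
qed

lemma abs_cos_diff_le: fixes u v :: real shows "\<bar>cos u - cos v\<bar> \<le> \<bar>u - v\<bar>"
proof -
  have "\<bar>cos u - cos v\<bar> = 2 * \<bar>sin ((u + v) / 2)\<bar> * \<bar>sin ((v - u) / 2)\<bar>"
    by (simp add: cos_diff_cos abs_mult)
  also have "\<dots> \<le> 2 * 1 * \<bar>(v - u) / 2\<bar>"
    by (intro mult_mono abs_sin_x_le_abs_x) auto
  finally show ?thesis by simp
qed

lemma rotate_pos_smaller_angle:
  fixes x y t f :: real
  assumes "0 < f" "f \<le> t" "t < pi" "x > 0" "cos t * x + sin t * y > 0"
  shows "cos f * x + sin f * y > 0"
proof -
  have "sin t > 0" "sin (t - f) \<ge> 0" "sin f > 0"
    using assms by (auto intro!: sin_gt_zero sin_ge_zero)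
  have "sin t * (cos f * x + sin f * y) = sin (t - f) * x + sin f * (cos t * x + sin t * y)"
    by (simp add: sin_diff algebra_simps)
  also have "\<dots> > 0"
    using assms \<open>sin (t - f) \<ge> 0\<close> \<open>sin f > 0\<close> by (intro add_nonneg_pos) simp_all
  finally show ?thesis using \<open>sin t > 0\<close> by (simp add: zero_less_mult_iff)
qed

lemma rotate_pos_larger_angle:
  fixes x y t f :: real
  assumes "0 \<le> t" "t \<le> f" "f < pi/2" "y > 0" "cos t * x + sin t * y > 0"
  shows "cos f * x + sin f * y > 0"
proof -
  have "cos t > 0" "sin (f - t) \<ge> 0" "cos f > 0"
    using assms by (auto intro!: cos_gt_zero_pi sin_ge_zero)
  have "cos t * (cos f * x + sin f * y) = cos f * (cos t * x + sin t * y) + sin (f - t) * y"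
    by (simp add: sin_diff algebra_simps)
  also have "\<dots> > 0"
    using assms \<open>sin (f - t) \<ge> 0\<close> \<open>cos f > 0\<close> by (intro add_pos_nonneg) simp_all
  finally show ?thesis using \<open>cos t > 0\<close> by (simp add: zero_less_mult_iff)
qed

lemma rotate_pos_nearby_angle:
  fixes x y t f e :: real
  assumes "\<bar>f - t\<bar> \<le> e" "cos t * x + sin t * y > e * (\<bar>x\<bar> + \<bar>y\<bar>)"
  shows "cos f * x + sin f * y > 0"
proof -
  have "\<bar>(cos f - cos t) * x\<bar> \<le> e * \<bar>x\<bar>"
    unfolding abs_mult using abs_cos_diff_le[of f t] assms by (intro mult_right_mono) auto
  moreover have "\<bar>(sin f - sin t) * y\<bar> \<le> e * \<bar>y\<bar>"
    unfolding abs_mult using abs_sin_diff_le[of f t] assms by (intro mult_right_mono) auto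
  ultimately show ?thesis using assms(2) by (simp add: algebra_simps abs_le_iff)
qed

text \<open>On a compact range the margin comes from continuity; beyond it, from \<open>y w\<close> growing
  like \<open>w\<close> while \<open>x w\<close> stays bounded.\<close>
lemma angle_margin:
  fixes x y :: "real \<Rightarrow> real"
  assumes cont: "continuous_on UNIV x" "continuous_on UNIV y"
    and x_bd: "\<And>w. \<bar>x w\<bar> \<le> M" and y_bd: "\<And>w. \<bar>y w - w\<bar> \<le> M"
    and t: "0 < t" "t \<le> pi/2" and pos: "\<And>w. w > 0 \<Longrightarrow> cos t * x w + sin t * y w > 0"
    and w1: "w1 > 0"
  shows "\<exists>\<eta>>0. \<forall>w\<ge>w1. cos t * x w + sin t * y w > \<eta> * (\<bar>x w\<bar> + \<bar>y w\<bar>)"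
proof -
  define f where "f w = cos t * x w + sin t * y w" for w
  have sc: "0 < sin t" "sin t \<le> 1" "0 \<le> cos t" "cos t \<le> 1"
    using t by (auto intro!: sin_gt_zero cos_ge_zero)
  have M: "M \<ge> 0" using x_bd[of 0] by linarith
  define w3 where "w3 = 6 * M / sin t + w1 + 1"
  have w3: "w1 < w3" "6 * M < sin t * w3"
  proof -
    have "6 * M / sin t \<ge> 0" using sc M by simp
    then show "w1 < w3" unfolding w3_def by linarith
    have "sin t * w3 = 6 * M + sin t * (w1 + 1)" using sc unfolding w3_def by (simp add: field_simps)
    then show "6 * M < sin t * w3" using sc w1 by simp
  qed
  have "continuous_on {w1..w3} f"
    unfolding f_def by (intro continuous_intros continuous_on_subset[OF cont(1)]
        continuous_on_subset[OF cont(2)]) auto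
  then have "\<exists>wm\<in>{w1..w3}. \<forall>w\<in>{w1..w3}. f wm \<le> f w"
    by (intro continuous_attains_inf[OF compact_Icc]) (use w3 in auto)
  then obtain wm where wm: "wm \<in> {w1..w3}" "\<forall>w\<in>{w1..w3}. f wm \<le> f w" by blast
  define c where "c = f wm"
  have c: "c > 0" unfolding c_def f_def using wm w1 pos by auto
  define K where "K = w3 + 2 * M + 1"
  have K: "K > 0" unfolding K_def using w3 w1 M by simp
  define \<eta> where "\<eta> = min (c / (2 * K)) (sin t / 2)"
  have \<eta>: "\<eta> > 0" unfolding \<eta>_def using c K sc by simp
  have "f w > \<eta> * (\<bar>x w\<bar> + \<bar>y w\<bar>)" if w: "w \<ge> w1" for w
  proof -
    have xy: "\<bar>x w\<bar> + \<bar>y w\<bar> \<le> w + 2 * M" using x_bd[of w] y_bd[of w] w w1 by (auto simp: abs_le_iff)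
    show ?thesis
    proof (cases "w \<le> w3")
      case True
      have "\<eta> * (\<bar>x w\<bar> + \<bar>y w\<bar>) \<le> c / (2 * K) * K"
        using xy True c K unfolding \<eta>_def K_def by (intro mult_mono) auto
      also have "\<dots> < c" using c K by simp
      also have "c \<le> f w" unfolding c_def using wm True w by auto
      finally show ?thesis .
    next
      case False
      have "sin t * w3 \<le> sin t * w" using False sc by simp
      have "\<eta> * (\<bar>x w\<bar> + \<bar>y w\<bar>) \<le> sin t / 2 * (w + 2 * M)"
        using xy sc unfolding \<eta>_def by (intro mult_mono) auto
      also have "\<dots> = sin t * w / 2 + sin t * M" by (simp add: algebra_simps)
      also have "\<dots> \<le> sin t * w / 2 + M" using sc M mult_left_le_one_le[of M "sin t"] by simp
      also have "\<dots> < sin t * w - 2 * M" using w3 \<open>sin t * w3 \<le> sin t * w\<close> by linarith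
      also have "\<dots> \<le> f w"
      proof -
        have "\<bar>cos t\<bar> * \<bar>x w\<bar> \<le> 1 * M" "\<bar>sin t\<bar> * \<bar>y w - w\<bar> \<le> 1 * M"
          using sc x_bd[of w] y_bd[of w] by (intro mult_mono; simp)+
        then have "- M \<le> cos t * x w" "- M \<le> sin t * (y w - w)"
          unfolding abs_mult[symmetric] abs_le_iff by simp_all
        moreover have "f w = cos t * x w + sin t * (y w - w) + sin t * w"
          unfolding f_def by (simp add: algebra_simps)
        ultimately show ?thesis by linarith
      qed
      finally show ?thesis .
    qed
  qed
  then show ?thesis unfolding f_def using \<eta> by blast
qed

text \<open>For w \<le> w1 the phase stays below t while x w > 0; for w1 \<le> w it is within \<eta> of t,
  unless it exceeds t + \<eta>, which forces w > w2 and hence y w > 0.\<close>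
lemma lag_arg_angle_pos:
  fixes x y :: "real \<Rightarrow> real"
  assumes \<gamma>: "0 \<le> \<gamma>" "\<gamma> < 1" and t: "t = (1 - \<gamma>) * (pi/2)"
    and pos: "\<And>w. w > 0 \<Longrightarrow> cos t * x w + sin t * y w > 0"
    and near0: "\<And>w. 0 \<le> w \<Longrightarrow> w \<le> w1 \<Longrightarrow> x w > 0"
    and margin: "\<And>w. w1 \<le> w \<Longrightarrow> cos t * x w + sin t * y w > \<eta> * (\<bar>x w\<bar> + \<bar>y w\<bar>)"
    and far: "\<And>w. w2 \<le> w \<Longrightarrow> y w > 0"
    and ab: "0 < a" "a \<le> \<eta> * w1" "0 < b" "w2 \<le> \<eta> * b" "w1 \<le> (1 - \<gamma>) * arctan (a / w1) * b"
    and w1: "0 < w1" and w: "0 \<le> w"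
  shows "cos (lag_arg a b \<gamma> w) * x w + sin (lag_arg a b \<gamma> w) * y w > 0"
proof (cases "w = 0")
  case True
  then show ?thesis using near0[of 0] w1 by (simp add: lag_arg_def)
next
  case False
  then have w: "w > 0" using w by simp
  define F where "F = lag_arg a b \<gamma> w"
  define u where "u = (1 - \<gamma>) * arctan (a / w)"
  define v where "v = \<gamma> * arctan (w / b)"
  have F: "F = t - u + v" "0 < F" "F < pi/2"
    using lag_arg_eq[OF ab(1) w] lag_arg_bounds[OF \<gamma> ab(1,3) w]
    unfolding F_def t u_def v_def by simp_all
  have u: "0 \<le> u" "u \<le> a / w"
  proof -
    show "0 \<le> u" unfolding u_def using \<gamma> ab w by simp
    have "u \<le> 1 * arctan (a / w)" unfolding u_def using \<gamma> ab w by (intro mult_right_mono) auto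
    then show "u \<le> a / w" using arctan_le_self[of "a / w"] ab w by simp
  qed
  have v: "0 \<le> v" "v \<le> w / b"
  proof -
    show "0 \<le> v" unfolding v_def using \<gamma> ab w by simp
    have "v \<le> 1 * arctan (w / b)" unfolding v_def using \<gamma> ab w by (intro mult_right_mono) auto
    then show "v \<le> w / b" using arctan_le_self[of "w / b"] ab w by simp
  qed
  show ?thesis
  proof (cases "w \<le> w1")
    case True
    have "v \<le> w1 / b" using v True ab by (meson divide_right_mono less_imp_le order.trans)
    also have "\<dots> \<le> (1 - \<gamma>) * arctan (a / w1)" using ab by (simp add: divide_le_eq)
    also have "\<dots> \<le> u" unfolding u_def using \<gamma> ab w True
      by (intro mult_left_mono arctan_monotone') (auto simp: divide_left_mono)
    finally have "F \<le> t" using F by linarith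
    then show ?thesis using rotate_pos_smaller_angle[OF F(2) _ _ near0 pos] w True t \<gamma>
      unfolding F_def by (simp add: mult_less_cancel_right1 order_le_less_trans[of _ "pi/2"])
  next
    case False
    have "u \<le> a / w1" using u False ab w1 by (meson divide_left_mono less_imp_le mult_pos_pos not_le order.trans)
    also have "\<dots> \<le> \<eta>" using ab w1 by (simp add: divide_le_eq)
    finally have "t - \<eta> \<le> F" using F v by linarith
    show ?thesis
    proof (cases "F \<le> t + \<eta>")
      case True
      then have "\<bar>F - t\<bar> \<le> \<eta>" using \<open>t - \<eta> \<le> F\<close> by linarith
      then show ?thesis using rotate_pos_nearby_angle margin False unfolding F_def by force
    next
      case False
      have "w2 / b \<le> \<eta>" using ab by (simp add: divide_le_eq mult.commute)
      then have "w2 / b < w / b" using False F u v by linarith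
      then have "y w > 0" using far ab by (simp add: divide_less_cancel)
      moreover have "0 \<le> t" unfolding t using \<gamma> by (intro mult_nonneg_nonneg) auto
      moreover have "t \<le> F"
        using False ab(1,2) w1 by (smt (verit) zero_less_mult_iff)
      ultimately show ?thesis using rotate_pos_larger_angle F(3) pos w unfolding F_def by blast
    qed
  qed
qed

lemma eventually_lag_arg_angle_pos:
  fixes x y :: "real \<Rightarrow> real"
  assumes cont: "continuous_on UNIV x" "continuous_on UNIV y"
    and x_bd: "\<And>w. \<bar>x w\<bar> \<le> M" and y_bd: "\<And>w. \<bar>y w - w\<bar> \<le> M"
    and x0: "x 0 > 0" and \<gamma>: "0 \<le> \<gamma>" "\<gamma> < 1" and t: "t = (1 - \<gamma>) * (pi/2)"
    and pos: "\<And>w. w > 0 \<Longrightarrow> cos t * x w + sin t * y w > 0"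
  shows "eventually (\<lambda>a. eventually (\<lambda>b. \<forall>w\<ge>0.
    cos (lag_arg a b \<gamma> w) * x w + sin (lag_arg a b \<gamma> w) * y w > 0) at_top) (at_right 0)"
proof -
  have t_bds: "0 < t" "t \<le> pi/2" unfolding t using \<gamma> by auto
  have "isCont x 0" using cont(1) continuous_on_eq_continuous_at by blast
  then obtain r where r: "r > 0" "\<forall>w. w \<noteq> 0 \<and> \<bar>0 - w\<bar> < r \<longrightarrow> x w > 0"
    using LIM_fun_gt_zero x0 unfolding isCont_def by blast
  define w1 where "w1 = r / 2"
  have w1: "w1 > 0" unfolding w1_def using r by simp
  have near0: "x w > 0" if "0 \<le> w" "w \<le> w1" for w
    using r x0 that unfolding w1_def by (cases "w = 0") auto
  obtain \<eta> where \<eta>: "\<eta> > 0"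
    and margin: "\<And>w. w1 \<le> w \<Longrightarrow> cos t * x w + sin t * y w > \<eta> * (\<bar>x w\<bar> + \<bar>y w\<bar>)"
    using angle_margin[OF cont x_bd y_bd t_bds pos w1] by blast
  have far: "y w > 0" if "M + 1 \<le> w" for w using y_bd[of w] that by (auto simp: abs_le_iff)
  show ?thesis unfolding eventually_at_right_field
  proof (intro exI[of _ "\<eta> * w1"] conjI allI impI)
    show "0 < \<eta> * w1" using \<eta> w1 by simp
    fix a :: real assume a: "0 < a" "a < \<eta> * w1"
    define L where "L = (1 - \<gamma>) * arctan (a / w1)"
    have L: "L > 0" unfolding L_def using \<gamma> a w1 by simp
    have "eventually (\<lambda>b. 0 < b \<and> (M + 1) / \<eta> \<le> b \<and> w1 / L \<le> b) at_top"
      by (intro eventually_conj eventually_gt_at_top eventually_ge_at_top)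
    then show "eventually (\<lambda>b. \<forall>w\<ge>0.
      cos (lag_arg a b \<gamma> w) * x w + sin (lag_arg a b \<gamma> w) * y w > 0) at_top"
    proof (rule eventually_mono)
      fix b assume b: "0 < b \<and> (M + 1) / \<eta> \<le> b \<and> w1 / L \<le> b"
      then have "M + 1 \<le> \<eta> * b" "w1 \<le> L * b" using \<eta> L by (auto simp: divide_le_eq mult.commute)
      then show "\<forall>w\<ge>0. cos (lag_arg a b \<gamma> w) * x w + sin (lag_arg a b \<gamma> w) * y w > 0"
        using lag_arg_angle_pos[of \<gamma> t x y w1 \<eta> "M + 1" a b, OF \<gamma> t pos near0 margin far] a b w1
        unfolding L_def by auto
    qed
  qed
qed

text \<open>Up to the positive modulus of the weight, this is the real part of
  h(j w)(1 + p(j w)/(j w)) for h(s) = s * lag_weight a b \<gamma> s.\<close>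
definition lag_condition :: "(complex \<Rightarrow> complex) \<Rightarrow> real \<Rightarrow> real \<Rightarrow> real \<Rightarrow> bool" where
  "lag_condition p a b \<gamma> \<longleftrightarrow>
    (\<forall>w\<ge>0. Re (cis (- lag_arg a b \<gamma> w) * (\<i> * of_real w + bval p (\<i> * of_real w))) > 0)"

lemma Re_rotated_imag_axis:
  assumes "w > 0"
  shows "Re (exp (\<i> * of_real \<theta>) * (1 + q / (\<i> * of_real w))) = (sin \<theta> * Re q + cos \<theta> * (w + Im q)) / w"
  using assms by (simp add: exp_Euler cos_of_real sin_of_real Re_divide field_simps power2_eq_square)

lemma eventually_lag_condition:
  assumes "A0 p" "Re (bval p 0) > 0" and \<theta>: "0 \<le> \<theta>" "\<theta> < pi/2"
    and cond: "\<forall>\<omega>>0. Re (exp (\<i> * of_real \<theta>) * (1 + bval p (\<i> * of_real \<omega>) / (\<i> * of_real \<omega>))) > 0"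
  shows "eventually (\<lambda>a. eventually (\<lambda>b. lag_condition p a b (2 * \<theta> / pi)) at_top) (at_right 0)"
proof -
  define x where "x w = Re (bval p (\<i> * of_real w))" for w
  define y where "y w = w + Im (bval p (\<i> * of_real w))" for w
  obtain L where cont: "continuous_on cRHP (bval p)" and lim: "(bval p \<longlongrightarrow> L) cRHP_at_infinity"
    using A0_bval_extension[OF assms(1)] by blast
  obtain M where M: "\<forall>z\<in>cRHP. norm (bval p z) \<le> M"
    using bounded_image_cRHP[OF cont lim] unfolding bounded_iff by auto
  have "continuous_on UNIV (\<lambda>w::real. bval p (\<i> * of_real w))"
    by (rule continuous_on_compose2[OF cont]) (auto intro!: continuous_intros)
  then have cont_xy: "continuous_on UNIV x" "continuous_on UNIV y"
    unfolding x_def y_def by (auto intro!: continuous_intros)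
  have x_bd: "\<bar>x w\<bar> \<le> M" and y_bd: "\<bar>y w - w\<bar> \<le> M" for w
    using M abs_Re_le_cmod abs_Im_le_cmod order_trans imag_axis_in_cRHP
    unfolding x_def y_def by fastforce+
  have \<gamma>: "0 \<le> 2 * \<theta> / pi" "2 * \<theta> / pi < 1" using \<theta> by (auto simp: field_simps)
  have t: "pi/2 - \<theta> = (1 - 2 * \<theta> / pi) * (pi/2)" by (simp add: field_simps)
  have "cos (pi/2 - \<theta>) * x w + sin (pi/2 - \<theta>) * y w > 0" if "w > 0" for w
  proof -
    have "Re (exp (\<i> * of_real \<theta>) * (1 + bval p (\<i> * of_real w) / (\<i> * of_real w))) > 0"
      using cond that by blast
    then have "(sin \<theta> * x w + cos \<theta> * y w) / w > 0"
      unfolding x_def y_def by (simp only: Re_rotated_imag_axis[OF that])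
    then show ?thesis using that by (simp add: zero_less_divide_iff cos_diff sin_diff)
  qed
  from eventually_lag_arg_angle_pos[OF cont_xy x_bd y_bd _ \<gamma> t this]
  show ?thesis
    using assms(2) unfolding lag_condition_def x_def y_def by (simp add: cis.code)
qed

lemma lag_multiplier_PR_A0:
  assumes \<gamma>: "0 \<le> \<gamma>" "\<gamma> < 1" and ab: "a > 0" "b > 0"
  shows "PR (\<lambda>s. s * lag_weight a b \<gamma> s) \<and> A0 (\<lambda>s. s * lag_weight a b \<gamma> s)"
proof -
  define h where "h s = s * lag_weight a b \<gamma> s" for s
  have hol: "h holomorphic_on RHP"
    unfolding h_def using lag_weight_holomorphic[OF ab] by (intro holomorphic_intros)
  have cont: "continuous_on cRHP h"
    unfolding h_def using lag_weight_continuous[OF ab] by (intro continuous_intros)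
  have lim: "(h \<longlongrightarrow> 1) cRHP_at_infinity" unfolding h_def using tendsto_lag_weight(1)[OF ab] .
  have real: "\<forall>x::real. x > 0 \<longrightarrow> h (of_real x) \<in> \<real>"
    unfolding h_def using lag_weight_of_real[OF ab] by (simp add: Reals_mult)
  have "\<forall>z\<in>cRHP. h (cnj z) = cnj (h z)" unfolding h_def using lag_weight_cnj[OF ab] by simp
  moreover have "Re (h (\<i> * of_real \<bar>w\<bar>)) \<ge> 0" for w
  proof -
    obtain \<rho> where \<rho>: "\<rho> > 0"
      "lag_weight a b \<gamma> (\<i> * of_real \<bar>w\<bar>) = of_real \<rho> * cis (- lag_arg a b \<gamma> \<bar>w\<bar>)"
      using lag_weight_imag_axis[OF ab] by blast
    have "sin (lag_arg a b \<gamma> \<bar>w\<bar>) \<ge> 0"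
      using lag_arg_bounds[OF \<gamma> ab, of "\<bar>w\<bar>"] by (cases "w = 0") (auto simp: lag_arg_def intro!: sin_ge_zero)
    then show ?thesis using \<rho> unfolding h_def by (simp add: cis.code)
  qed
  ultimately have "\<forall>w. Re (h (\<i> * of_real w)) \<ge> 0" using Re_imag_axis_abs by metis
  then have "PR h" using PR_minus_const_if_Re_imag_axis_ge[OF hol real cont _ lim, of 0] by simp
  then show ?thesis using A0_if_continuous_extension[OF hol cont _ lim] unfolding h_def by simp
qed

lemma lag_multiplier_Pset:
  assumes p: "A0 p" "\<forall>x::real. x > 0 \<longrightarrow> p (of_real x) \<in> \<real>" "bval p 0 \<noteq> 0"
    and ab: "a > 0" "b > 0" and cond: "lag_condition p a b \<gamma>"
  shows "p \<in> Pset (\<lambda>s. s * lag_weight a b \<gamma> s)"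
proof -
  define g where "g s = s * lag_weight a b \<gamma> s * (1 + p s / s)" for s
  define G where "G s = lag_weight a b \<gamma> s * (s + bval p s)" for s
  obtain L where cont: "continuous_on cRHP (bval p)" and eq: "\<forall>s\<in>RHP. bval p s = p s"
    and lim: "(bval p \<longlongrightarrow> L) cRHP_at_infinity"
    using A0_bval_extension[OF p(1)] by blast
  have holp: "p holomorphic_on RHP" using p(1) unfolding A0_def Hinf_def by blast
  have hol: "g holomorphic_on RHP" unfolding g_def
    using lag_weight_holomorphic[OF ab] holp by (intro holomorphic_intros) (auto simp: RHP_def)
  have real: "\<forall>x::real. x > 0 \<longrightarrow> g (of_real x) \<in> \<real>"
    unfolding g_def using lag_weight_of_real[OF ab] p(2) by (auto intro!: Reals_mult Reals_add Reals_divide)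
  have contG: "continuous_on cRHP G"
    unfolding G_def using lag_weight_continuous[OF ab] cont by (intro continuous_intros)
  have eqG: "\<forall>s\<in>RHP. G s = g s"
    unfolding G_def g_def using eq by (auto simp: RHP_def field_simps)
  have "((\<lambda>s. s * lag_weight a b \<gamma> s + lag_weight a b \<gamma> s * bval p s) \<longlongrightarrow> 1 + 0 * L) cRHP_at_infinity"
    by (intro tendsto_intros tendsto_lag_weight[OF ab] lim)
  then have limG: "(G \<longlongrightarrow> 1) cRHP_at_infinity" unfolding G_def by (simp add: algebra_simps)
  have "\<forall>z\<in>cRHP. G (cnj z) = cnj (G z)"
    unfolding G_def using lag_weight_cnj[OF ab] bval_cnj[OF p(1,2)] by simp
  moreover have "Re (G (\<i> * of_real \<bar>w\<bar>)) > 0" for w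
  proof -
    obtain \<rho> where \<rho>: "\<rho> > 0"
      "lag_weight a b \<gamma> (\<i> * of_real \<bar>w\<bar>) = of_real \<rho> * cis (- lag_arg a b \<gamma> \<bar>w\<bar>)"
      using lag_weight_imag_axis[OF ab] by blast
    then show ?thesis using cond unfolding lag_condition_def G_def by (simp add: mult.assoc)
  qed
  ultimately have "\<forall>w. Re (G (\<i> * of_real w)) > 0" using Re_imag_axis_abs by metis
  then have "ESPR g" using ESPR_if_Re_imag_axis_pos[OF hol real contG eqG limG] by simp
  moreover have "Hinf p" using p(1) unfolding A0_def by blast
  ultimately show ?thesis unfolding Pset_def g_def using p(3) by simp
qed

theorem lemma5:
  fixes p :: "nat \<Rightarrow> complex \<Rightarrow> complex" and n :: nat and \<theta> :: real
  assumes A0p: "\<forall>i<n. A0 (p i)"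
    and realp: "\<forall>i<n. \<forall>x::real. x > 0 \<longrightarrow> p i (of_real x) \<in> \<real>"
    and pos0: "\<forall>i<n. bval (p i) 0 \<in> \<real> \<and> Re (bval (p i) 0) > 0"
    and th: "0 \<le> \<theta>" "\<theta> < pi / 2"
    and cond: "\<forall>i<n. \<forall>\<omega>::real. \<omega> > 0 \<longrightarrow>
       Re (exp (\<i> * of_real \<theta>) * (1 + bval (p i) (\<i> * of_real \<omega>) / (\<i> * of_real \<omega>))) > 0"
  shows "\<exists>h. PR h \<and> A0 h \<and> (\<forall>i<n. p i \<in> Pset h)"
proof -
  define \<gamma> where "\<gamma> = 2 * \<theta> / pi"
  have \<gamma>: "0 \<le> \<gamma>" "\<gamma> < 1" unfolding \<gamma>_def using th by (auto simp: field_simps)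
  have "\<forall>i\<in>{..<n}. eventually (\<lambda>a. eventually (\<lambda>b. lag_condition (p i) a b \<gamma>) at_top) (at_right 0)"
    using eventually_lag_condition A0p pos0 th cond unfolding \<gamma>_def by simp
  then have "eventually (\<lambda>a. 0 < a \<and> (\<forall>i\<in>{..<n}. eventually (\<lambda>b. lag_condition (p i) a b \<gamma>) at_top))
      (at_right 0)"
    by (intro eventually_conj eventually_at_right_less eventually_ball_finite) auto
  from eventually_happens'[OF trivial_limit_at_right_real this]
  obtain a where a: "0 < a" "\<forall>i\<in>{..<n}. eventually (\<lambda>b. lag_condition (p i) a b \<gamma>) at_top"
    by blast
  then have "eventually (\<lambda>b. 0 < b \<and> (\<forall>i\<in>{..<n}. lag_condition (p i) a b \<gamma>)) at_top"
    by (intro eventually_conj eventually_gt_at_top eventually_ball_finite) auto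
  from eventually_happens'[OF trivial_limit_at_top_linorder this]
  obtain b where b: "0 < b" "\<forall>i\<in>{..<n}. lag_condition (p i) a b \<gamma>" by blast
  have "\<forall>i<n. bval (p i) 0 \<noteq> 0" using pos0 by force
  then show ?thesis
    using lag_multiplier_PR_A0[OF \<gamma> a(1) b(1)] lag_multiplier_Pset[OF _ _ _ a(1) b(1)] A0p realp b(2)
    by auto
qed

end
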